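(* For every integer $n\ge 1$, $$\Phi^{(1)}[aq^n; b, b'; c; x, y] = \Phi^{(1)}[a; b, b'; c; x, y] + \frac{ax(1-b)}{1-c} \sum_{k=1}^n q^{k-1} \Phi^{(1)}[aq^k; bq, b'; cq; x, y] + \frac{ay(1-b')}{1-c} \sum_{k=1}^n q^{k-1} \Phi^{(1)}[aq^k; b, b'q; cq; xq, y]$$ and $$\Phi^{(1)}[aq^{-n}; b, b'; c; x, y] = \Phi^{(1)}[a; b, b'; c; x, y] - \frac{ax(1-b)}{1-c} \sum_{k=1}^n q^{-k} \Phi^{(1)}[aq^{1-k}; bq, b'; cq; x, y] - \frac{ay(1-b')}{1-c} \sum_{k=1}^n q^{-k} \Phi^{(1)}[aq^{1-k}; b, b'q; cq; xq, y].$$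
   Context: Let $q$ be a complex number with $0<|q|<1$. For complex $z$ and integer $m\ge 0$, $(z;q)_m=\prod_{j=0}^{m-1}(1-zq^j)$, with $(z;q)_0=1$. The $q$-Appell function $\Phi^{(1)}$ is $$\Phi^{(1)}[a; b, b'; c; x, y] = \sum_{m, n \geq 0} \frac{(a; q)_{m+n} (b; q)_m (b'; q)_n}{(q; q)_m (q; q)_n (c; q)_{m+n}} x^m y^n.$$ Identities are understood as identities of power series in $x,y$ (formal, or convergent for small $|x|,|y|$), with complex parameters $a,b,b',c$ chosen so that no denominator occurring vanishes. *)

theory Defs
  imports "HOL-Analysis.Analysis"
begin

definition qpoch :: "complex \<Rightarrow> complex \<Rightarrow> nat \<Rightarrow> complex" where
  "qpoch z q m = (\<Prod>j<m. 1 - z * q ^ j)"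

definition appell1_term ::
  "complex \<Rightarrow> complex \<Rightarrow> complex \<Rightarrow> complex \<Rightarrow> complex \<Rightarrow> complex \<Rightarrow> complex \<Rightarrow> nat \<times> nat \<Rightarrow> complex" where
  "appell1_term q a b b' c x y mn =
     (case mn of (m, n) \<Rightarrow>
        qpoch a q (m + n) * qpoch b q m * qpoch b' q n
        / (qpoch q q m * qpoch q q n * qpoch c q (m + n)) * x ^ m * y ^ n)"

definition appell1 ::
  "complex \<Rightarrow> complex \<Rightarrow> complex \<Rightarrow> complex \<Rightarrow> complex \<Rightarrow> complex \<Rightarrow> complex \<Rightarrow> complex" where
  "appell1 q a b b' c x y = (\<Sum>\<^sub>\<infinity> mn \<in> UNIV. appell1_term q a b b' c x y mn)"

end

theory Submission
  imports Defs
begin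

text \<open>
  Termwise, (aq;q)_N - (a;q)_N = a (1 - q^N) (aq;q)_(N-1), and splitting
  1 - q^(m+n) = (1 - q^m) + q^m (1 - q^n) turns the two halves into shifted terms of
  Phi[aq; bq, b'; cq; x, y] and Phi[aq; b, b'q; cq; xq, y]. Summing gives the contiguous relation
  Phi[aq] = Phi[a] + a x (1-b)/(1-c) Phi[aq; bq, b'; cq; x, y] + a y (1-b')/(1-c) Phi[aq; b, b'q; cq; xq, y],
  and iterating it upwards from a, resp. downwards to a q^(-n), telescopes to both identities.
  The double series converge absolutely because the q-Pochhammer symbols converge as infinite
  products, so they are bounded, and bounded away from 0 when no factor vanishes.
\<close>

lemma qpoch_Suc: "qpoch z q (Suc m) = qpoch z q m * (1 - z * q ^ m)"
  by (simp add: qpoch_def)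

lemma qpoch_Suc_shift: "qpoch z q (Suc m) = (1 - z) * qpoch (z * q) q m"
  unfolding qpoch_def by (subst prod.lessThan_Suc_shift) (simp add: mult.assoc)

lemma qpoch_nonzero: "(\<And>j. z * q ^ j \<noteq> 1) \<Longrightarrow> qpoch z q m \<noteq> 0"
  by (auto simp: qpoch_def)

lemma qpoch_shift_diff:
  "qpoch (z * q) q (Suc m) - qpoch z q (Suc m) = z * (1 - q ^ Suc m) * qpoch (z * q) q m"
proof -
  have "qpoch (z * q) q (Suc m) = qpoch (z * q) q m * (1 - z * q * q ^ m)" by (rule qpoch_Suc)
  moreover have "qpoch z q (Suc m) = (1 - z) * qpoch (z * q) q m" by (rule qpoch_Suc_shift)
  ultimately show ?thesis by (simp add: algebra_simps)
qed

lemma q_times_power_ne_1: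
  fixes q :: complex
  assumes "norm q < 1"
  shows "q * q ^ j \<noteq> 1"
proof -
  have "norm (q * q ^ j) \<le> norm q"
    using assms by (simp add: norm_mult norm_power mult_left_le power_le_one)
  with assms show ?thesis by auto
qed

lemma qpoch_q_nonzero:
  fixes q :: complex
  assumes "norm q < 1"
  shows "qpoch q q m \<noteq> 0"
  using q_times_power_ne_1[OF assms] by (rule qpoch_nonzero)

lemma abs_convergent_prod_qpoch:
  fixes z q :: complex
  assumes "norm q < 1"
  shows "abs_convergent_prod (\<lambda>j. 1 - z * q ^ j)"
proof (rule summable_imp_abs_convergent_prod)
  show "summable (\<lambda>j. norm (1 - z * q ^ j - 1))"
    using assms by (simp add: norm_mult norm_power summable_mult summable_geometric)
qed

lemma Bseq_qpoch:
  assumes "norm q < 1"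
  shows "Bseq (qpoch z q)"
proof -
  have "convergent (\<lambda>m. \<Prod>j\<le>m. 1 - z * q ^ j)"
    using abs_convergent_prod_imp_convergent_prod[OF abs_convergent_prod_qpoch[OF assms]]
    by (rule convergent_prod_imp_convergent)
  then have "Bseq (\<lambda>m. qpoch z q (Suc m))"
    by (simp add: qpoch_def lessThan_Suc_atMost convergent_imp_Bseq)
  then show ?thesis by (simp add: Bseq_Suc_iff)
qed

lemma Bseq_inverse_qpoch:
  assumes "norm q < 1" and "\<And>j. z * q ^ j \<noteq> 1"
  shows "Bseq (\<lambda>m. inverse (qpoch z q m))"
proof -
  obtain L where L: "(\<lambda>m. \<Prod>j\<le>m. 1 - z * q ^ j) \<longlonglongrightarrow> L" "L \<noteq> 0"
    using abs_convergent_prod_imp_convergent_prod[OF abs_convergent_prod_qpoch[OF assms(1)]]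
      convergent_prod_iff_nz_lim[of "\<lambda>j. 1 - z * q ^ j"] assms(2) by auto
  then have "(\<lambda>m. inverse (qpoch z q (Suc m))) \<longlonglongrightarrow> inverse L"
    by (simp add: qpoch_def lessThan_Suc_atMost tendsto_inverse)
  then show ?thesis
    using convergent_imp_Bseq convergentI Bseq_Suc_iff by blast
qed

lemma summable_on_geometric_times:
  fixes X Y :: real
  assumes "0 \<le> X" "X < 1" "0 \<le> Y" "Y < 1"
  shows "(\<lambda>(m, n). X ^ m * Y ^ n) summable_on UNIV"
proof -
  have "(\<lambda>(m, n). X ^ m * Y ^ n) summable_on Sigma UNIV (\<lambda>_. UNIV)"
  proof (rule summable_on_SigmaI)
    fix m :: nat
    have "(\<lambda>n. X ^ m * Y ^ n) sums (X ^ m / (1 - Y))"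
      using sums_mult[OF geometric_sums[of Y], of "X ^ m"] assms by simp
    then show "((\<lambda>n. (\<lambda>(m, n). X ^ m * Y ^ n) (m, n)) has_sum (X ^ m / (1 - Y))) UNIV"
      using assms by (intro sums_nonneg_imp_has_sum) auto
  next
    show "(\<lambda>m. X ^ m / (1 - Y)) summable_on UNIV"
      using assms by (auto intro!: summable_nonneg_imp_summable_on summable_divide summable_geometric)
  qed (use assms in auto)
  then show ?thesis by simp
qed

lemma appell1_term_summable:
  fixes q a b b' c x y :: complex
  assumes q: "norm q < 1" and c: "\<And>j. c * q ^ j \<noteq> 1"
    and x: "norm x < 1" and y: "norm y < 1"
  shows "appell1_term q a b b' c x y summable_on UNIV"
proof -
  obtain Ka where "0 < Ka" and Ka: "\<And>m. norm (qpoch a q m) \<le> Ka"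
    using Bseq_qpoch[OF q, of a] by (auto simp: Bseq_def)
  obtain Kb where "0 < Kb" and Kb: "\<And>m. norm (qpoch b q m) \<le> Kb"
    using Bseq_qpoch[OF q, of b] by (auto simp: Bseq_def)
  obtain Kb' where "0 < Kb'" and Kb': "\<And>m. norm (qpoch b' q m) \<le> Kb'"
    using Bseq_qpoch[OF q, of "b'"] by (auto simp: Bseq_def)
  obtain Kq where "0 < Kq" and Kq: "\<And>m. norm (inverse (qpoch q q m)) \<le> Kq"
    using Bseq_inverse_qpoch[OF q q_times_power_ne_1[OF q]] by (auto simp: Bseq_def)
  obtain Kc where "0 < Kc" and Kc: "\<And>m. norm (inverse (qpoch c q m)) \<le> Kc"
    using Bseq_inverse_qpoch[OF q c] by (auto simp: Bseq_def)
  define K where "K = Ka * Kb * Kb' * Kq * Kq * Kc"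
  have bound: "norm (appell1_term q a b b' c x y (m, n)) \<le> K * (norm x ^ m * norm y ^ n)" for m n
  proof -
    have "norm (appell1_term q a b b' c x y (m, n)) =
        norm (qpoch a q (m + n)) * norm (qpoch b q m) * norm (qpoch b' q n)
        * norm (inverse (qpoch q q m)) * norm (inverse (qpoch q q n))
        * norm (inverse (qpoch c q (m + n))) * (norm x ^ m * norm y ^ n)"
      by (simp add: appell1_term_def norm_mult norm_divide norm_power norm_inverse divide_inverse)
    also have "\<dots> \<le> K * (norm x ^ m * norm y ^ n)"
      unfolding K_def using \<open>0 < Ka\<close> \<open>0 < Kb\<close> \<open>0 < Kb'\<close> \<open>0 < Kq\<close> \<open>0 < Kc\<close>
      by (intro mult_mono Ka Kb Kb' Kq Kc) auto
    finally show ?thesis .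
  qed
  have "(\<lambda>mn. K * (case mn of (m, n) \<Rightarrow> norm x ^ m * norm y ^ n)) summable_on UNIV"
    using summable_on_geometric_times[of "norm x" "norm y"] x y
    by (intro summable_on_cmult_right) (auto simp: case_prod_unfold)
  then have "(\<lambda>mn. norm (appell1_term q a b b' c x y mn)) summable_on UNIV"
    by (rule summable_on_comparison_test) (auto simp: bound case_prod_unfold)
  then show ?thesis by (simp add: summable_on_iff_abs_summable_on_complex)
qed

lemma appell1_term_shift_a:
  fixes q a b b' c x y :: complex
  assumes q: "norm q < 1" and c: "\<And>j. c * q ^ j \<noteq> 1"
  shows "appell1_term q (a * q) b b' c x y (m, n) = appell1_term q a b b' c x y (m, n)
     + (if m = 0 then 0 else a * x * (1 - b) / (1 - c) * appell1_term q (a * q) (b * q) b' (c * q) x y (m - 1, n))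
     + (if n = 0 then 0 else a * y * (1 - b') / (1 - c) * appell1_term q (a * q) b (b' * q) (c * q) (x * q) y (m, n - 1))"
proof (cases "m + n = 0")
  case True
  then show ?thesis by (simp add: appell1_term_def qpoch_def)
next
  case False
  have c1: "1 - c \<noteq> 0" using c[of 0] by simp
  have cq: "qpoch (c * q) q k \<noteq> 0" for k
    by (rule qpoch_nonzero) (metis c mult.assoc power_Suc)
  have Q: "qpoch q q k \<noteq> 0" "1 - q * q ^ k \<noteq> 0" for k
    using qpoch_q_nonzero[OF q] q_times_power_ne_1[OF q] by auto
  define R where "R = qpoch (a * q) q (m + n - 1) * qpoch b q m * qpoch b' q n
    / (qpoch q q m * qpoch q q n * qpoch c q (m + n)) * x ^ m * y ^ n"
  have diff: "appell1_term q (a * q) b b' c x y (m, n) - appell1_term q a b b' c x y (m, n)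
      = a * (1 - q ^ (m + n)) * R"
  proof -
    obtain M where "m + n = Suc M" using False not0_implies_Suc by blast
    then have A: "qpoch (a * q) q (m + n) - qpoch a q (m + n) = a * (1 - q ^ (m + n)) * qpoch (a * q) q (m + n - 1)"
      using qpoch_shift_diff[of a q M] by simp
    have "appell1_term q (a * q) b b' c x y (m, n) - appell1_term q a b b' c x y (m, n)
        = (qpoch (a * q) q (m + n) - qpoch a q (m + n)) * qpoch b q m * qpoch b' q n
          / (qpoch q q m * qpoch q q n * qpoch c q (m + n)) * x ^ m * y ^ n"
      by (simp add: appell1_term_def left_diff_distrib diff_divide_distrib)
    then show ?thesis
      unfolding A R_def by (simp add: mult.assoc)
  qed
  have first: "a * (1 - q ^ m) * R = (if m = 0 then 0 else a * x * (1 - b) / (1 - c) * appell1_term q (a * q) (b * q) b' (c * q) x y (m - 1, n))"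
  proof (cases m)
    case (Suc i)
    have e: "qpoch q q m = qpoch q q i * (1 - q * q ^ i)" "qpoch b q m = (1 - b) * qpoch (b * q) q i"
      "qpoch c q (m + n) = (1 - c) * qpoch (c * q) q (i + n)"
      "m - 1 = i" "m + n - 1 = i + n" "q ^ m = q * q ^ i" "x ^ m = x * x ^ i"
      using Suc qpoch_Suc qpoch_Suc_shift by simp_all
    show ?thesis
      unfolding appell1_term_def R_def e using Suc Q[of i] Q[of n] c1 cq[of "i + n"]
      by (simp add: divide_simps)
  qed simp
  have second: "a * q ^ m * (1 - q ^ n) * R = (if n = 0 then 0 else a * y * (1 - b') / (1 - c) * appell1_term q (a * q) b (b' * q) (c * q) (x * q) y (m, n - 1))"
  proof (cases n)
    case (Suc j)
    have e: "qpoch q q n = qpoch q q j * (1 - q * q ^ j)" "qpoch b' q n = (1 - b') * qpoch (b' * q) q j"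
      "qpoch c q (m + n) = (1 - c) * qpoch (c * q) q (m + j)"
      "n - 1 = j" "m + n - 1 = m + j" "q ^ n = q * q ^ j" "y ^ n = y * y ^ j"
      using Suc qpoch_Suc qpoch_Suc_shift by simp_all
    show ?thesis
      unfolding appell1_term_def R_def e using Suc Q[of j] Q[of m] c1 cq[of "m + j"]
      by (simp add: divide_simps)
  qed simp
  show ?thesis using diff first second by (simp add: algebra_simps power_add)
qed

lemma has_sum_reindex_extend:
  fixes f g :: "'a \<Rightarrow> 'b::{comm_monoid_add,topological_space}"
  assumes "(g has_sum S) UNIV" and "inj h"
    and "\<And>p. f (h p) = g p" and "\<And>u. u \<notin> range h \<Longrightarrow> f u = 0"
  shows "(f has_sum S) UNIV"
proof -
  have "(f has_sum S) (range h)"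
    using assms(1-3) by (simp add: has_sum_reindex comp_def)
  then show ?thesis
    using has_sum_cong_neutral[of UNIV "range h" f f] assms(4) by auto
qed

lemma has_sum_shift_fst:
  fixes g :: "nat \<times> nat \<Rightarrow> 'b::{comm_monoid_add,topological_space}"
  assumes "(g has_sum S) UNIV"
  shows "((\<lambda>(m, n). if m = 0 then 0 else g (m - 1, n)) has_sum S) UNIV"
proof (rule has_sum_reindex_extend[OF assms, where h = "\<lambda>(m, n). (Suc m, n)"])
  fix u :: "nat \<times> nat"
  assume u: "u \<notin> range (\<lambda>(m, n). (Suc m, n))"
  obtain m n where "u = (m, n)" by fastforce
  moreover have "u \<noteq> (Suc (m - 1), n)"
    using u rangeI[of "\<lambda>(m, n). (Suc m, n)" "(m - 1, n)"] by auto
  ultimately show "(\<lambda>(m, n). if m = 0 then 0 else g (m - 1, n)) u = 0" by (cases m) auto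
qed (auto simp: inj_def)

lemma has_sum_shift_snd:
  fixes g :: "nat \<times> nat \<Rightarrow> 'b::{comm_monoid_add,topological_space}"
  assumes "(g has_sum S) UNIV"
  shows "((\<lambda>(m, n). if n = 0 then 0 else g (m, n - 1)) has_sum S) UNIV"
proof (rule has_sum_reindex_extend[OF assms, where h = "\<lambda>(m, n). (m, Suc n)"])
  fix u :: "nat \<times> nat"
  assume u: "u \<notin> range (\<lambda>(m, n). (m, Suc n))"
  obtain m n where "u = (m, n)" by fastforce
  moreover have "u \<noteq> (m, Suc (n - 1))"
    using u rangeI[of "\<lambda>(m, n). (m, Suc n)" "(m, n - 1)"] by auto
  ultimately show "(\<lambda>(m, n). if n = 0 then 0 else g (m, n - 1)) u = 0" by (cases n) auto
qed (auto simp: inj_def)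

lemma appell1_shift_a:
  fixes q a b b' c x y :: complex
  assumes q: "norm q < 1" and c: "\<And>j. c * q ^ j \<noteq> 1"
    and x: "norm x < 1" and y: "norm y < 1"
  shows "appell1 q (a * q) b b' c x y = appell1 q a b b' c x y
     + a * x * (1 - b) / (1 - c) * appell1 q (a * q) (b * q) b' (c * q) x y
     + a * y * (1 - b') / (1 - c) * appell1 q (a * q) b (b' * q) (c * q) (x * q) y"
proof -
  have cq: "c * q * q ^ j \<noteq> 1" for j by (metis c mult.assoc power_Suc)
  have xq: "norm (x * q) < 1"
  proof -
    have "norm x * norm q \<le> norm q" using x by (intro mult_left_le_one_le) auto
    with q show ?thesis by (simp add: norm_mult)
  qed
  define K1 where "K1 = a * x * (1 - b) / (1 - c)"
  define K2 where "K2 = a * y * (1 - b') / (1 - c)"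
  define t1 where "t1 = appell1_term q (a * q) (b * q) b' (c * q) x y"
  define t2 where "t2 = appell1_term q (a * q) b (b' * q) (c * q) (x * q) y"
  have h0: "(appell1_term q a b b' c x y has_sum appell1 q a b b' c x y) UNIV"
    unfolding appell1_def using appell1_term_summable[OF q c x y] by (rule has_sum_infsum)
  have h1: "((\<lambda>(m, n). if m = 0 then 0 else K1 * t1 (m - 1, n))
      has_sum K1 * appell1 q (a * q) (b * q) b' (c * q) x y) UNIV"
    unfolding appell1_def t1_def using appell1_term_summable[OF q cq x y]
    by (intro has_sum_shift_fst has_sum_cmult_right has_sum_infsum)
  have h2: "((\<lambda>(m, n). if n = 0 then 0 else K2 * t2 (m, n - 1))
      has_sum K2 * appell1 q (a * q) b (b' * q) (c * q) (x * q) y) UNIV"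
    unfolding appell1_def t2_def using appell1_term_summable[OF q cq xq y]
    by (intro has_sum_shift_snd has_sum_cmult_right has_sum_infsum)
  have "(appell1_term q (a * q) b b' c x y has_sum appell1 q a b b' c x y
      + K1 * appell1 q (a * q) (b * q) b' (c * q) x y + K2 * appell1 q (a * q) b (b' * q) (c * q) (x * q) y) UNIV"
  proof (rule has_sum_cong[THEN iffD1, OF _ has_sum_add[OF has_sum_add[OF h0 h1] h2]])
    fix p :: "nat \<times> nat"
    show "appell1_term q a b b' c x y p + (\<lambda>(m, n). if m = 0 then 0 else K1 * t1 (m - 1, n)) p
        + (\<lambda>(m, n). if n = 0 then 0 else K2 * t2 (m, n - 1)) p = appell1_term q (a * q) b b' c x y p"
      using appell1_term_shift_a[OF q c, of a b b' x y "fst p" "snd p"]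
      by (simp add: K1_def K2_def t1_def t2_def case_prod_unfold)
  qed
  then show ?thesis
    unfolding appell1_def K1_def K2_def by (rule infsumI)
qed

lemma q_difference_iterate:
  fixes F D :: "'a::field \<Rightarrow> 'a"
  assumes step: "\<And>z. F (z * q) = F z + z * D (z * q)"
  shows "F (a * q ^ n) = F a + (\<Sum>k=1..n. a * q ^ (k - 1) * D (a * q ^ k))"
proof (induction n)
  case (Suc n)
  have "a * q ^ n * q = a * q ^ Suc n" by (simp add: mult_ac)
  then have "F (a * q ^ Suc n) = F (a * q ^ n) + a * q ^ n * D (a * q ^ Suc n)"
    using step[of "a * q ^ n"] by (simp only:)
  with Suc show ?case by simp
qed simp

lemma q_difference_iterate_inverse:
  fixes F D :: "'a::field \<Rightarrow> 'a"
  assumes "q \<noteq> 0" and step: "\<And>z. F (z * q) = F z + z * D (z * q)"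
  shows "F (a * q powi - int n) = F a - (\<Sum>k=1..n. a * q powi - int k * D (a * q powi (1 - int k)))"
proof (induction n)
  case (Suc n)
  have "- int (Suc n) = - int n - 1" by simp
  then have "a * q powi - int (Suc n) * q = a * q powi - int n"
    by (simp only: mult.assoc power_int_minus_mult[OF disjI1, OF \<open>q \<noteq> 0\<close>])
  then have "F (a * q powi - int n) = F (a * q powi - int (Suc n)) + a * q powi - int (Suc n) * D (a * q powi - int n)"
    using step[of "a * q powi - int (Suc n)"] by (simp only:)
  with Suc show ?case by (simp add: algebra_simps)
qed simp

theorem theorem1:
  fixes q a b b' c x y :: complex and n :: nat
  assumes hq: "0 < norm q" "norm q < 1"
    and hc: "\<And>j::nat. c * q ^ j \<noteq> 1"
    and hx: "norm x < 1" and hy: "norm y < 1"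
    and hn: "n \<ge> 1"
  shows "appell1 q (a * q ^ n) b b' c x y =
           appell1 q a b b' c x y
           + a * x * (1 - b) / (1 - c) * (\<Sum>k=1..n. q ^ (k - 1) * appell1 q (a * q ^ k) (b * q) b' (c * q) x y)
           + a * y * (1 - b') / (1 - c) * (\<Sum>k=1..n. q ^ (k - 1) * appell1 q (a * q ^ k) b (b' * q) (c * q) (x * q) y)
       \<and> appell1 q (a * q powi (- int n)) b b' c x y =
           appell1 q a b b' c x y
           - a * x * (1 - b) / (1 - c) * (\<Sum>k=1..n. q powi (- int k) * appell1 q (a * q powi (1 - int k)) (b * q) b' (c * q) x y)
           - a * y * (1 - b') / (1 - c) * (\<Sum>k=1..n. q powi (- int k) * appell1 q (a * q powi (1 - int k)) b (b' * q) (c * q) (x * q) y)"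
proof -
  define D where "D z = x * (1 - b) / (1 - c) * appell1 q z (b * q) b' (c * q) x y
    + y * (1 - b') / (1 - c) * appell1 q z b (b' * q) (c * q) (x * q) y" for z
  have step: "appell1 q (z * q) b b' c x y = appell1 q z b b' c x y + z * D (z * q)" for z
    using appell1_shift_a[OF hq(2) hc hx hy, of z] by (simp add: D_def algebra_simps)
  have "q \<noteq> 0" using hq(1) by auto
  \<comment> \<open>Both identities also hold for \<open>n = 0\<close>.\<close>
  show ?thesis
    using q_difference_iterate[of "\<lambda>z. appell1 q z b b' c x y", OF step, of a n]
      q_difference_iterate_inverse[of q "\<lambda>z. appell1 q z b b' c x y", OF \<open>q \<noteq> 0\<close> step, of a n]
    by (simp add: D_def sum_distrib_left sum.distrib algebra_simps)
qed

end
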